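(* Let $m,n$ be positive integers with $m\ge n$. Then there exists a common knowledge distinguishing debate game $B=(A,S,P,C_w,C_l)$ such that $|C_w(s)|\ge m$ and $|C_l(s)|\le n$ for all $s\in S$, but $e^{\mathrm{CKDDG}}_B(M)\ge\frac{2n-m}{2m}$ for every policy $M$.
   Context: Let $\delta$ be a special default action. A CKDDG is a tuple $(A,S,P,C_w,C_l)$ with $A$ finite, $\delta\notin A$, $S$ finite, $P$ a probability mass function on $S$, and $C_w,C_l:S\to\mathcal P(A)$. A policy is $M:\{1,2\}\times(A\cup\{\delta\})^2\to[0,1]$ with $M(1,a_1,a_2)+M(2,a_1,a_2)=1$. For $j\in\{1,2\}$ and $s\in S$, $w^i_M((j,s))$ is the value to agent $i$ of the two-player zero-sum game with payoff matrix $M(i,\cdot,\cdot)$ in which agent $j$ chooses from $C_w(s)\cup\{\delta\}$ and the other agent chooses from $C_l(s)\cup\{\delta\}$. The error is $e^{\mathrm{CKDDG}}_B(M)=\mathbb E_{s\sim P}\left[\frac{w^1_M((2,s))+w^2_M((1,s))}{2}\right]$. *)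

theory Defs
  imports Complex_Main
begin

text \<open>Actions are of type 'a option; None plays the role of the default action delta,
  so delta is automatically not an element of A (encoded as Some ` A).\<close>

type_synonym 'a policy = "nat \<Rightarrow> 'a option \<Rightarrow> 'a option \<Rightarrow> real"

definition ext_actions :: "'a set \<Rightarrow> 'a option set" where
  "ext_actions C = insert None (Some ` C)"

definition is_ckddg :: "'a set \<Rightarrow> 's set \<Rightarrow> ('s \<Rightarrow> real) \<Rightarrow> ('s \<Rightarrow> 'a set) \<Rightarrow> ('s \<Rightarrow> 'a set) \<Rightarrow> bool" where
  "is_ckddg A S P Cw Cl \<longleftrightarrow> finite A \<and> finite S \<and> S \<noteq> {} \<and>
     (\<forall>s\<in>S. 0 \<le> P s) \<and> (\<Sum>s\<in>S. P s) = 1 \<and>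
     (\<forall>s\<in>S. Cw s \<subseteq> A \<and> Cl s \<subseteq> A)"

definition is_policy :: "'a set \<Rightarrow> 'a policy \<Rightarrow> bool" where
  "is_policy A M \<longleftrightarrow> (\<forall>a1\<in>ext_actions A. \<forall>a2\<in>ext_actions A.
     (\<forall>i\<in>{1,2}. 0 \<le> M i a1 a2 \<and> M i a1 a2 \<le> 1) \<and> M 1 a1 a2 + M 2 a1 a2 = 1)"

definition mixed :: "'b set \<Rightarrow> ('b \<Rightarrow> real) set" where
  "mixed X = {p. (\<forall>x. 0 \<le> p x) \<and> (\<forall>x. x \<notin> X \<longrightarrow> p x = 0) \<and> sum p X = 1}"

definition exp_payoff :: "'a policy \<Rightarrow> nat \<Rightarrow> 'a option set \<Rightarrow> 'a option set
     \<Rightarrow> ('a option \<Rightarrow> real) \<Rightarrow> ('a option \<Rightarrow> real) \<Rightarrow> real" where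
  "exp_payoff M i X1 X2 p1 p2 = (\<Sum>a1\<in>X1. \<Sum>a2\<in>X2. p1 a1 * p2 a2 * M i a1 a2)"

definition game_value :: "'a policy \<Rightarrow> nat \<Rightarrow> 'a option set \<Rightarrow> 'a option set \<Rightarrow> real" where
  "game_value M i X1 X2 =
     (if i = 1 then (SUP p1\<in>mixed X1. INF p2\<in>mixed X2. exp_payoff M 1 X1 X2 p1 p2)
      else (SUP p2\<in>mixed X2. INF p1\<in>mixed X1. exp_payoff M 2 X1 X2 p1 p2))"

text \<open>w^i_M((j,s)): agent j chooses from Cw s \<union> {delta}, the other from Cl s \<union> {delta}.\<close>
definition wval :: "('s \<Rightarrow> 'a set) \<Rightarrow> ('s \<Rightarrow> 'a set) \<Rightarrow> 'a policy \<Rightarrow> nat \<Rightarrow> nat \<Rightarrow> 's \<Rightarrow> real" where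
  "wval Cw Cl M i j s =
     (if j = 1 then game_value M i (ext_actions (Cw s)) (ext_actions (Cl s))
      else game_value M i (ext_actions (Cl s)) (ext_actions (Cw s)))"

definition ckddg_error :: "'s set \<Rightarrow> ('s \<Rightarrow> real) \<Rightarrow> ('s \<Rightarrow> 'a set) \<Rightarrow> ('s \<Rightarrow> 'a set)
     \<Rightarrow> 'a policy \<Rightarrow> real" where
  "ckddg_error S P Cw Cl M =
     (\<Sum>s\<in>S. P s * ((wval Cw Cl M 1 2 s + wval Cw Cl M 2 1 s) / 2))"

end

theory Submission
  imports Defs
begin

(* Take m states and m actions; the winning side may always use every action, the losing side
   in state s only a cyclic window of n actions, shifted with s.  By the minimax theorem the
   unrestricted game has values c and 1 - c for the two agents (up to any epsilon).  In each
   state the restricted agent plays its optimal unrestricted strategy with the mass outside the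
   window moved to the default action; as payoffs lie in [0, 1] it loses at most that mass.  Each
   action lies outside m - n of the m windows, so on average each agent loses at most (m - n)/m,
   and the error is at least (1 - 2 (m - n)/m)/2 = (2n - m)/(2m).  The minimax theorem is derived
   from Ville's theorem of the alternative, proved by Fourier-Motzkin elimination. *)

section \<open>Conic combinations and Ville's theorem of the alternative\<close>

definition nonneg_combinations :: "('c \<Rightarrow> real) set \<Rightarrow> ('c \<Rightarrow> real) set" where
  "nonneg_combinations V = {x. \<exists>c. (\<forall>v\<in>V. 0 \<le> c v) \<and> x = (\<lambda>j. \<Sum>v\<in>V. c v * v j)}"

lemma nonneg_combinations_base:
  assumes "finite V" "v \<in> V"
  shows "v \<in> nonneg_combinations V"
  unfolding nonneg_combinations_def
proof (intro CollectI exI conjI)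
  show "\<forall>w\<in>V. 0 \<le> (if w = v then 1 else 0 :: real)" by simp
  have "(\<Sum>w\<in>V. (if w = v then 1 else 0) * w j) = (\<Sum>w\<in>V. if w = v then v j else 0)" for j
    by (rule sum.cong) auto
  then show "v = (\<lambda>j. \<Sum>w\<in>V. (if w = v then 1 else 0) * w j)"
    using assms by simp
qed

lemma nonneg_combinations_zero: "(\<lambda>j. 0) \<in> nonneg_combinations V"
  unfolding nonneg_combinations_def by (intro CollectI exI[of _ "\<lambda>w. 0"]) auto

lemma nonneg_combinations_add:
  assumes "x \<in> nonneg_combinations V" "y \<in> nonneg_combinations V"
  shows "(\<lambda>j. x j + y j) \<in> nonneg_combinations V"
proof -
  obtain c d where "\<forall>v\<in>V. 0 \<le> c v" "x = (\<lambda>j. \<Sum>v\<in>V. c v * v j)"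
    and "\<forall>v\<in>V. 0 \<le> d v" "y = (\<lambda>j. \<Sum>v\<in>V. d v * v j)"
    using assms unfolding nonneg_combinations_def by auto
  then show ?thesis unfolding nonneg_combinations_def
    by (intro CollectI exI[of _ "\<lambda>v. c v + d v"]) (auto simp: distrib_right sum.distrib)
qed

lemma nonneg_combinations_scale:
  assumes "x \<in> nonneg_combinations V" "0 \<le> t"
  shows "(\<lambda>j. t * x j) \<in> nonneg_combinations V"
proof -
  obtain c where "\<forall>v\<in>V. 0 \<le> c v" "x = (\<lambda>j. \<Sum>v\<in>V. c v * v j)"
    using assms(1) unfolding nonneg_combinations_def by auto
  then show ?thesis unfolding nonneg_combinations_def
    by (intro CollectI exI[of _ "\<lambda>v. t * c v"]) (auto simp: assms(2) sum_distrib_left mult.assoc)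
qed

lemma nonneg_combinations_sum:
  assumes "finite W" "W \<subseteq> nonneg_combinations V" "\<forall>w\<in>W. 0 \<le> c w"
  shows "(\<lambda>j. \<Sum>w\<in>W. c w * w j) \<in> nonneg_combinations V"
  using assms
proof (induction W rule: finite_induct)
  case empty
  then show ?case using nonneg_combinations_zero by simp
next
  case (insert w W)
  then show ?case
    using nonneg_combinations_add[OF nonneg_combinations_scale[of w V "c w"] insert.IH] by auto
qed

lemma nonneg_combinations_subset:
  assumes "finite W" "W \<subseteq> nonneg_combinations V"
  shows "nonneg_combinations W \<subseteq> nonneg_combinations V"
  using nonneg_combinations_sum[OF assms] unfolding nonneg_combinations_def[of W] by auto

lemma nonneg_combinations_image:
  assumes "finite R" "x \<in> nonneg_combinations (f ` R)"
  obtains p where "\<forall>i\<in>R. 0 \<le> p i" "x = (\<lambda>j. \<Sum>i\<in>R. p i * f i j)"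
proof -
  obtain c where c: "\<forall>v\<in>f ` R. 0 \<le> c v" "x = (\<lambda>j. \<Sum>v\<in>f ` R. c v * v j)"
    using assms(2) unfolding nonneg_combinations_def by auto
  define fibre where "fibre v = {i\<in>R. f i = v}" for v
  define p where "p i = c (f i) / card (fibre (f i))" for i
  have fibre_card: "card (fibre (f i)) > 0" if "i \<in> R" for i
    unfolding fibre_def using assms(1) that by (auto simp: card_gt_0_iff)
  have "(\<Sum>i\<in>R. p i * f i j) = x j" for j
  proof -
    have "(\<Sum>i\<in>R. p i * f i j) = (\<Sum>v\<in>f ` R. \<Sum>i\<in>fibre v. p i * f i j)"
      unfolding fibre_def using assms(1) by (rule sum.image_gen)
    also have "\<dots> = (\<Sum>v\<in>f ` R. c v * v j)"
    proof (rule sum.cong[OF refl])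
      fix v assume "v \<in> f ` R"
      then obtain i0 where "i0 \<in> R" "f i0 = v" by auto
      moreover have "(\<Sum>i\<in>fibre v. p i * f i j) = card (fibre v) * (c v / card (fibre v) * v j)"
        by (simp add: p_def fibre_def)
      ultimately show "(\<Sum>i\<in>fibre v. p i * f i j) = c v * v j"
        using fibre_card by fastforce
    qed
    finally show ?thesis using c(2) by simp
  qed
  moreover have "\<forall>i\<in>R. 0 \<le> p i" using c(1) unfolding p_def by auto
  ultimately show ?thesis using that by auto
qed

definition fourier_motzkin :: "'c \<Rightarrow> ('c \<Rightarrow> real) set \<Rightarrow> ('c \<Rightarrow> real) set" where
  "fourier_motzkin k V = {v\<in>V. 0 \<le> v k} \<union>
     (\<lambda>(u, v) j. v k * u j - u k * v j) ` ({u\<in>V. u k < 0} \<times> {v\<in>V. 0 < v k})"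

lemma finite_fourier_motzkin: "finite V \<Longrightarrow> finite (fourier_motzkin k V)"
  unfolding fourier_motzkin_def by auto

lemma fourier_motzkin_nonneg: "w \<in> fourier_motzkin k V \<Longrightarrow> 0 \<le> w k"
  unfolding fourier_motzkin_def by auto

lemma fourier_motzkin_subset:
  assumes "finite V"
  shows "fourier_motzkin k V \<subseteq> nonneg_combinations V"
proof
  fix w assume w: "w \<in> fourier_motzkin k V"
  show "w \<in> nonneg_combinations V"
  proof (cases "w \<in> V")
    case True
    then show ?thesis by (rule nonneg_combinations_base[OF assms])
  next
    case False
    then obtain u v where uv: "u \<in> V" "v \<in> V" "u k < 0" "0 < v k"
      and w_eq: "w = (\<lambda>j. v k * u j + (- u k) * v j)"
      using w unfolding fourier_motzkin_def by auto
    show ?thesis unfolding w_eq using uv assms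
      by (intro nonneg_combinations_add nonneg_combinations_scale nonneg_combinations_base) auto
  qed
qed

text \<open>The new coordinate t must satisfy t \<ge> S u / - u k for u k < 0 and t \<le> - S v / v k for
  v k > 0, where S v is the old sum; the pair combinations in fourier_motzkin say exactly that
  every such lower bound is below every such upper bound.\<close>
lemma fourier_motzkin_dual_extend:
  fixes q :: "'c \<Rightarrow> real"
  assumes "finite V" and elim: "\<forall>w\<in>fourier_motzkin k V. (\<Sum>j\<in>C. w j * q j) \<le> 0"
  shows "\<exists>t\<ge>0. \<forall>v\<in>V. v k * t + (\<Sum>j\<in>C. v j * q j) \<le> 0"
proof -
  define S where "S v = (\<Sum>j\<in>C. v j * q j)" for v :: "'c \<Rightarrow> real"
  define lower where "lower = insert 0 ((\<lambda>u. S u / - u k) ` {u\<in>V. u k < 0})"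
  define t where "t = Max lower"
  have fin: "finite lower" unfolding lower_def using assms(1) by auto
  have t_ge: "l \<le> t" if "l \<in> lower" for l unfolding t_def using fin that by simp
  have "t \<in> lower" unfolding t_def using fin by (intro Max_in) (auto simp: lower_def)
  then consider "t = 0" | u where "u \<in> V" "u k < 0" "t = S u / - u k"
    unfolding lower_def by auto
  note t_cases = this
  have S_elim: "S w \<le> 0" if "w \<in> fourier_motzkin k V" for w using elim that by (simp add: S_def)
  have "v k * t + S v \<le> 0" if v: "v \<in> V" for v
  proof (cases "v k < 0")
    case True
    then have "S v / - v k \<le> t" using v by (intro t_ge) (auto simp: lower_def)
    then have "S v \<le> t * - v k" using True by (subst (asm) pos_divide_le_eq) auto
    then show ?thesis by (simp add: algebra_simps)
  next
    case False
    then have "S v \<le> 0" using v by (intro S_elim) (auto simp: fourier_motzkin_def)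
    from t_cases show ?thesis
    proof cases
      case 1
      then show ?thesis using \<open>S v \<le> 0\<close> by simp
    next
      case (2 u)
      show ?thesis
      proof (cases "v k = 0")
        case True
        then show ?thesis using \<open>S v \<le> 0\<close> by simp
      next
        case False
        then have "(\<lambda>j. v k * u j - u k * v j) \<in> fourier_motzkin k V"
          using 2 v \<open>\<not> v k < 0\<close> unfolding fourier_motzkin_def by force
        then have "S (\<lambda>j. v k * u j - u k * v j) \<le> 0" by (rule S_elim)
        moreover have "S (\<lambda>j. v k * u j - u k * v j) = v k * S u - u k * S v"
          unfolding S_def by (simp add: sum_subtractf sum_distrib_left algebra_simps)
        ultimately have le: "v k * S u - u k * S v \<le> 0" by simp
        have "v k * t + S v = (v k * (t * - u k) - u k * S v) / - u k"
          using 2(2) by (simp add: field_simps)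
        also have "\<dots> = (v k * S u - u k * S v) / - u k" using 2 by simp
        also have "\<dots> \<le> 0" using le 2(2) by (intro divide_nonpos_pos) auto
        finally show ?thesis .
      qed
    qed
  qed
  then show ?thesis using t_ge[of 0] unfolding S_def lower_def by auto
qed

lemma perturb_positive:
  fixes x v :: "'c \<Rightarrow> real"
  assumes "finite C" "\<forall>j\<in>C. 0 < x j" "0 \<le> x k" "0 < v k"
  shows "\<exists>e>0. \<forall>j\<in>insert k C. 0 < x j + e * v j"
proof -
  have "\<forall>\<^sub>F e in at_right 0. 0 < x j + e * v j" if "j \<in> C" for j
  proof (rule order_tendstoD)
    have "((\<lambda>e. x j + e * v j) \<longlongrightarrow> x j + 0 * v j) (at_right 0)"
      by (intro tendsto_intros)
    then show "((\<lambda>e. x j + e * v j) \<longlongrightarrow> x j) (at_right 0)" by simp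
  qed (use assms(2) that in blast)
  then have "\<forall>\<^sub>F e in at_right 0. \<forall>j\<in>C. 0 < x j + e * v j"
    using assms(1) by (simp add: eventually_ball_finite)
  then have "\<forall>\<^sub>F e in at_right (0::real). 0 < e \<and> (\<forall>j\<in>C. 0 < x j + e * v j)"
    by (rule eventually_conj[OF eventually_at_right_less])
  then obtain e :: real where "0 < e" "\<forall>j\<in>C. 0 < x j + e * v j"
    using eventually_happens'[OF trivial_limit_at_right_real] by blast
  moreover have "0 < x k + e * v k" using assms(3,4) \<open>0 < e\<close> by (simp add: add_nonneg_pos)
  ultimately show ?thesis by auto
qed

lemma fourier_motzkin_dual_insert:
  assumes "finite V" "finite C" "k \<notin> C" "\<forall>j\<in>C. 0 \<le> q j" "0 < sum q C"
    "\<forall>w\<in>fourier_motzkin k V. (\<Sum>j\<in>C. w j * q j) \<le> 0"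
  shows "\<exists>q'. (\<forall>j\<in>insert k C. 0 \<le> q' j) \<and> 0 < sum q' (insert k C)
           \<and> (\<forall>v\<in>V. (\<Sum>j\<in>insert k C. v j * q' j) \<le> 0)"
proof -
  obtain t where t: "0 \<le> t" "\<forall>v\<in>V. v k * t + (\<Sum>j\<in>C. v j * q j) \<le> 0"
    using fourier_motzkin_dual_extend[OF assms(1,6)] by blast
  have q_C: "(\<Sum>j\<in>C. f j * (q(k := t)) j) = (\<Sum>j\<in>C. f j * q j)" for f
    using assms(3) by (intro sum.cong) auto
  have "sum (q(k := t)) (insert k C) = t + sum q C"
    using q_C[of "\<lambda>_. 1"] assms(2,3) by simp
  moreover have "(\<Sum>j\<in>insert k C. v j * (q(k := t)) j) = v k * t + (\<Sum>j\<in>C. v j * q j)" for v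
    using q_C[of v] assms(2,3) by simp
  ultimately show ?thesis using assms(4,5) t by (intro exI[of _ "q(k := t)"]) auto
qed

lemma fourier_motzkin_primal_insert:
  assumes "finite V" "finite C" "x \<in> nonneg_combinations (fourier_motzkin k V)" "\<forall>j\<in>C. 0 < x j"
    and "v \<in> V" "0 < v k"
  shows "\<exists>y\<in>nonneg_combinations V. \<forall>j\<in>insert k C. 0 < y j"
proof -
  have x_V: "x \<in> nonneg_combinations V"
    using assms(3) nonneg_combinations_subset[OF finite_fourier_motzkin fourier_motzkin_subset,
        OF assms(1) assms(1)] by blast
  obtain c where "\<forall>w\<in>fourier_motzkin k V. 0 \<le> c w"
    "x = (\<lambda>j. \<Sum>w\<in>fourier_motzkin k V. c w * w j)"
    using assms(3) unfolding nonneg_combinations_def by blast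
  then have "0 \<le> x k" by (auto intro!: sum_nonneg mult_nonneg_nonneg dest: fourier_motzkin_nonneg)
  then obtain e where "0 < e" "\<forall>j\<in>insert k C. 0 < x j + e * v j"
    using perturb_positive[of C x k v] assms(2,4,6) by blast
  moreover have "(\<lambda>j. x j + e * v j) \<in> nonneg_combinations V"
    using nonneg_combinations_add[OF x_V nonneg_combinations_scale[OF
          nonneg_combinations_base[OF assms(1,5)]]] \<open>0 < e\<close> by simp
  ultimately show ?thesis by (intro bexI[of _ "\<lambda>j. x j + e * v j"]) simp_all
qed

theorem ville_alternative:
  fixes V :: "('c \<Rightarrow> real) set"
  assumes "finite C" "finite V"
  shows "(\<exists>q. (\<forall>j\<in>C. 0 \<le> q j) \<and> 0 < sum q C \<and> (\<forall>v\<in>V. (\<Sum>j\<in>C. v j * q j) \<le> 0))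
         \<or> (\<exists>x\<in>nonneg_combinations V. \<forall>j\<in>C. 0 < x j)"
  using assms
proof (induction C arbitrary: V rule: finite_induct)
  case empty
  then show ?case using nonneg_combinations_zero by auto
next
  case (insert k C V)
  show ?case
  proof (cases "\<exists>v\<in>V. 0 < v k")
    case False
    define q where "q j = (if j = k then 1 else 0 :: real)" for j
    have q_C: "(\<Sum>j\<in>C. v j * q j) = 0" for v
      using insert.hyps by (intro sum.neutral) (auto simp: q_def)
    have "(\<Sum>j\<in>insert k C. v j * q j) = v k" for v
      using insert.hyps q_C[of v] by (simp add: q_def)
    moreover have "sum q (insert k C) = 1"
      using insert.hyps q_C[of "\<lambda>_. 1"] by (simp add: q_def)
    moreover have "\<forall>j\<in>insert k C. 0 \<le> q j" by (simp add: q_def)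
    ultimately show ?thesis using False by (intro disjI1 exI[of _ q]) (simp add: not_less)
  next
    case True
    then obtain v where "v \<in> V" "0 < v k" by blast
    from insert.IH[OF finite_fourier_motzkin[of V k, OF insert.prems]] show ?thesis
      using fourier_motzkin_dual_insert[OF insert.prems insert.hyps]
        fourier_motzkin_primal_insert[OF insert.prems insert.hyps(1) _ _ \<open>v \<in> V\<close> \<open>0 < v k\<close>]
      by blast
  qed
qed

section \<open>Mixed strategies and the minimax theorem\<close>

lemma mixed_expectation_ge:
  assumes "finite X" "p \<in> mixed X" "\<forall>x\<in>X. L \<le> f x"
  shows "L \<le> (\<Sum>x\<in>X. p x * f x)"
proof -
  have "(\<Sum>x\<in>X. p x * L) \<le> (\<Sum>x\<in>X. p x * f x)"
    using assms by (intro sum_mono mult_left_mono) (auto simp: mixed_def)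
  then show ?thesis using assms(2) by (simp add: mixed_def sum_distrib_right[symmetric])
qed

lemma mixed_expectation_le:
  assumes "finite X" "p \<in> mixed X" "\<forall>x\<in>X. f x \<le> U"
  shows "(\<Sum>x\<in>X. p x * f x) \<le> U"
proof -
  have "(\<Sum>x\<in>X. p x * f x) \<le> (\<Sum>x\<in>X. p x * U)"
    using assms by (intro sum_mono mult_left_mono) (auto simp: mixed_def)
  then show ?thesis using assms(2) by (simp add: mixed_def sum_distrib_right[symmetric])
qed

lemma mixed_pure: "finite X \<Longrightarrow> x0 \<in> X \<Longrightarrow> (\<lambda>x. if x = x0 then 1 else 0) \<in> mixed X"
  unfolding mixed_def by auto

definition normalize_weights :: "('b \<Rightarrow> real) \<Rightarrow> 'b set \<Rightarrow> 'b \<Rightarrow> real" where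
  "normalize_weights w X x = (if x \<in> X then w x / sum w X else 0)"

lemma normalize_weights_mixed:
  assumes "\<forall>x\<in>X. 0 \<le> w x" "0 < sum w X"
  shows "normalize_weights w X \<in> mixed X"
  using assms unfolding mixed_def normalize_weights_def
  by (auto simp: sum_divide_distrib[symmetric])

lemma sum_normalize_weights:
  "(\<Sum>x\<in>X. normalize_weights w X x * f x) = (\<Sum>x\<in>X. w x * f x) / sum w X"
  unfolding normalize_weights_def by (simp add: sum_divide_distrib)

text \<open>Ville's alternative for the shifted payoff vectors a i - c.\<close>
lemma mixed_strategy_alternative:
  fixes a :: "'r \<Rightarrow> 'c \<Rightarrow> real"
  assumes "finite R" "finite C" "C \<noteq> {}"
  shows "(\<exists>q\<in>mixed C. \<forall>i\<in>R. (\<Sum>j\<in>C. q j * a i j) \<le> c)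
         \<or> (\<exists>p\<in>mixed R. \<forall>j\<in>C. c < (\<Sum>i\<in>R. p i * a i j))"
proof -
  define row where "row i j = a i j - c" for i j
  from ville_alternative[OF assms(2) finite_imageI[OF assms(1)], of row] show ?thesis
  proof (elim disjE exE conjE bexE)
    fix r assume r: "\<forall>j\<in>C. 0 \<le> r j" "0 < sum r C" "\<forall>v\<in>row ` R. (\<Sum>j\<in>C. v j * r j) \<le> 0"
    have "(\<Sum>j\<in>C. r j * a i j) / sum r C \<le> c" if "i \<in> R" for i
    proof -
      have "(\<Sum>j\<in>C. row i j * r j) = (\<Sum>j\<in>C. r j * a i j) - c * sum r C"
        unfolding row_def by (simp add: sum_subtractf sum_distrib_left algebra_simps)
      moreover have "(\<Sum>j\<in>C. row i j * r j) \<le> 0" using r(3) that by simp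
      ultimately show ?thesis using r(2) by (simp add: pos_divide_le_eq)
    qed
    then show ?thesis using normalize_weights_mixed[OF r(1,2)]
      by (intro disjI1 bexI[of _ "normalize_weights r C"]) (simp_all add: sum_normalize_weights)
  next
    fix x assume x: "x \<in> nonneg_combinations (row ` R)" "\<forall>j\<in>C. 0 < x j"
    obtain p where p: "\<forall>i\<in>R. 0 \<le> p i" "x = (\<lambda>j. \<Sum>i\<in>R. p i * row i j)"
      using nonneg_combinations_image[OF assms(1) x(1)] by blast
    have x_eq: "x j = (\<Sum>i\<in>R. p i * a i j) - c * sum p R" for j
      unfolding p(2) row_def by (simp add: sum_subtractf sum_distrib_left algebra_simps)
    have "sum p R \<noteq> 0"
    proof
      assume "sum p R = 0"
      then have "\<forall>i\<in>R. p i = 0" using p(1) assms(1) by (simp add: sum_nonneg_eq_0_iff)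
      moreover obtain j where "j \<in> C" using assms(3) by blast
      ultimately show False using x(2) p(2) by fastforce
    qed
    then have p_pos: "0 < sum p R" using p(1) by (simp add: sum_nonneg order_less_le)
    have "c < (\<Sum>i\<in>R. p i * a i j) / sum p R" if "j \<in> C" for j
    proof -
      have "0 < x j" using x(2) that by blast
      then show ?thesis using x_eq[of j] p_pos by (simp add: pos_less_divide_eq)
    qed
    then show ?thesis using normalize_weights_mixed[OF p(1) p_pos]
      by (intro disjI2 bexI[of _ "normalize_weights p R"]) (simp_all add: sum_normalize_weights)
  qed
qed

text \<open>c is the infimum of the levels to which the column player can hold the row player;
  the alternative at level c - \<epsilon> supplies the row strategy.\<close>
theorem minimax_approx:
  fixes a :: "'r \<Rightarrow> 'c \<Rightarrow> real"
  assumes "finite R" "finite C" "R \<noteq> {}" "C \<noteq> {}" "0 < \<epsilon>"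
  obtains c p q where "p \<in> mixed R" "q \<in> mixed C"
    "\<forall>j\<in>C. c - \<epsilon> \<le> (\<Sum>i\<in>R. p i * a i j)" "\<forall>i\<in>R. (\<Sum>j\<in>C. q j * a i j) \<le> c + \<epsilon>"
proof -
  define T where "T = {c. \<exists>q\<in>mixed C. \<forall>i\<in>R. (\<Sum>j\<in>C. q j * a i j) \<le> c}"
  obtain i0 j0 where i0: "i0 \<in> R" and j0: "j0 \<in> C" using assms(3,4) by blast
  have "bdd_below T"
  proof (rule bdd_belowI)
    fix c assume "c \<in> T"
    then obtain q where q: "q \<in> mixed C" "\<forall>i\<in>R. (\<Sum>j\<in>C. q j * a i j) \<le> c"
      unfolding T_def by blast
    have "Min (a i0 ` C) \<le> (\<Sum>j\<in>C. q j * a i0 j)"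
      using assms(2) q(1) by (intro mixed_expectation_ge) auto
    also have "\<dots> \<le> c" using q(2) i0 by blast
    finally show "Min (a i0 ` C) \<le> c" .
  qed
  have "(\<Sum>j\<in>C. (if j = j0 then 1 else 0) * a i j) = (\<Sum>j\<in>C. if j = j0 then a i j else 0)" for i
    by (rule sum.cong) auto
  then have "(\<Sum>j\<in>C. (if j = j0 then 1 else 0) * a i j) = a i j0" for i
    using assms(2) j0 by simp
  then have "Max ((\<lambda>i. a i j0) ` R) \<in> T"
    unfolding T_def using mixed_pure[OF assms(2) j0] assms(1)
    by (intro CollectI bexI[of _ "\<lambda>j. if j = j0 then 1 else 0"]) auto
  then have "T \<noteq> {}" by blast
  then obtain t where "t \<in> T" "t < Inf T + \<epsilon>"
    using cInf_lessD[of T "Inf T + \<epsilon>"] assms(5) by auto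
  then obtain q where q: "q \<in> mixed C" "\<forall>i\<in>R. (\<Sum>j\<in>C. q j * a i j) \<le> Inf T + \<epsilon>"
    unfolding T_def by fastforce
  have "Inf T - \<epsilon> \<notin> T"
    using cInf_lower[OF _ \<open>bdd_below T\<close>, of "Inf T - \<epsilon>"] assms(5) by auto
  then obtain p where "p \<in> mixed R" "\<forall>j\<in>C. Inf T - \<epsilon> < (\<Sum>i\<in>R. p i * a i j)"
    using mixed_strategy_alternative[OF assms(1,2,4), of a "Inf T - \<epsilon>"] unfolding T_def by blast
  then show ?thesis using that[of p q "Inf T"] q by fastforce
qed

section \<open>Values of restricted games\<close>

lemma exp_payoff_rows: "exp_payoff M i X1 X2 p q = (\<Sum>a\<in>X1. p a * (\<Sum>b\<in>X2. q b * M i a b))"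
  unfolding exp_payoff_def by (simp add: sum_distrib_left mult.assoc)

lemma exp_payoff_cols: "exp_payoff M i X1 X2 p q = (\<Sum>b\<in>X2. q b * (\<Sum>a\<in>X1. p a * M i a b))"
  unfolding exp_payoff_def by (subst sum.swap) (simp add: sum_distrib_left algebra_simps)

lemma exp_payoff_bounds:
  assumes "finite X1" "finite X2" "p \<in> mixed X1" "q \<in> mixed X2"
    "\<forall>a\<in>X1. \<forall>b\<in>X2. 0 \<le> M i a b \<and> M i a b \<le> 1"
  shows "0 \<le> exp_payoff M i X1 X2 p q" "exp_payoff M i X1 X2 p q \<le> 1"
proof -
  have row: "0 \<le> (\<Sum>b\<in>X2. q b * M i a b) \<and> (\<Sum>b\<in>X2. q b * M i a b) \<le> 1" if "a \<in> X1" for a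
    using assms that by (auto intro!: mixed_expectation_ge mixed_expectation_le)
  show "0 \<le> exp_payoff M i X1 X2 p q" unfolding exp_payoff_rows
    by (rule mixed_expectation_ge[OF assms(1,3)]) (use row in blast)
  show "exp_payoff M i X1 X2 p q \<le> 1" unfolding exp_payoff_rows
    by (rule mixed_expectation_le[OF assms(1,3)]) (use row in blast)
qed

lemma game_value_ge:
  assumes "finite X" "finite Y" "Y \<noteq> {}" "\<forall>a\<in>X. \<forall>b\<in>Y. 0 \<le> M 1 a b \<and> M 1 a b \<le> 1"
    and "p \<in> mixed X" "\<forall>q\<in>mixed Y. L \<le> exp_payoff M 1 X Y p q"
  shows "L \<le> game_value M 1 X Y"
proof -
  obtain b0 where "b0 \<in> Y" using assms(3) by blast
  with assms(2) have pure: "(\<lambda>b. if b = b0 then 1 else 0) \<in> mixed Y" by (rule mixed_pure)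
  have bounds: "0 \<le> exp_payoff M 1 X Y p' q \<and> exp_payoff M 1 X Y p' q \<le> 1"
    if "p' \<in> mixed X" "q \<in> mixed Y" for p' q
    using exp_payoff_bounds[of X Y p' q M 1, OF assms(1,2) that assms(4)] by simp
  have "L \<le> (INF q\<in>mixed Y. exp_payoff M 1 X Y p q)"
    using assms(6) pure by (intro cINF_greatest) auto
  also have "\<dots> \<le> (SUP p\<in>mixed X. INF q\<in>mixed Y. exp_payoff M 1 X Y p q)"
  proof (rule cSUP_upper[OF assms(5)])
    have "(INF q\<in>mixed Y. exp_payoff M 1 X Y p' q) \<le> 1" if "p' \<in> mixed X" for p'
      using pure bounds that
      by (intro cINF_lower[THEN order_trans] bdd_belowI2[where m = 0]) auto
    then show "bdd_above ((\<lambda>p. INF q\<in>mixed Y. exp_payoff M 1 X Y p q) ` mixed X)"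
      by (intro bdd_aboveI2[where M = 1])
  qed
  finally show ?thesis by (simp add: game_value_def)
qed

definition swap_roles :: "'a policy \<Rightarrow> 'a policy" where
  "swap_roles M i a b = M (3 - i) b a"

lemma game_value_swap_roles: "game_value M 2 X1 X2 = game_value (swap_roles M) 1 X2 X1"
proof -
  have "exp_payoff (swap_roles M) 1 X2 X1 q p = exp_payoff M 2 X1 X2 p q" for p q
    unfolding exp_payoff_def swap_roles_def by (subst sum.swap) (simp add: mult.commute)
  then show ?thesis by (simp add: game_value_def)
qed

definition reassign_outside :: "'b set \<Rightarrow> 'b set \<Rightarrow> 'b \<Rightarrow> ('b \<Rightarrow> real) \<Rightarrow> 'b \<Rightarrow> real" where
  "reassign_outside X R d p x =
     (if x = d then p d + sum p (X - R) else if x \<in> R then p x else 0)"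

lemma reassign_outside_mixed:
  assumes "finite X" "R \<subseteq> X" "d \<in> R" "p \<in> mixed X"
  shows "reassign_outside X R d p \<in> mixed R"
proof -
  have "finite R" using assms(1,2) by (rule finite_subset[rotated])
  have "sum (reassign_outside X R d p) R
        = reassign_outside X R d p d + sum (reassign_outside X R d p) (R - {d})"
    using \<open>finite R\<close> assms(3) by (rule sum.remove)
  also have "sum (reassign_outside X R d p) (R - {d}) = sum p (R - {d})"
    by (rule sum.cong) (auto simp: reassign_outside_def)
  also have "reassign_outside X R d p d + sum p (R - {d}) = sum p (X - R) + sum p R"
    using \<open>finite R\<close> assms(3) by (simp add: reassign_outside_def sum.remove)
  also have "\<dots> = 1" using assms by (simp add: sum.subset_diff[symmetric] mixed_def)
  finally show ?thesis
    using assms(3,4) by (auto simp: mixed_def reassign_outside_def intro!: sum_nonneg add_nonneg_nonneg)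
qed

lemma reassign_outside_expectation:
  assumes "finite X" "R \<subseteq> X" "d \<in> R" "p \<in> mixed X" "\<forall>x\<in>X. 0 \<le> f x \<and> f x \<le> 1"
  shows "(\<Sum>x\<in>X. p x * f x) - sum p (X - R) \<le> (\<Sum>x\<in>R. reassign_outside X R d p x * f x)"
proof -
  have "(\<Sum>x\<in>X. p x * f x) = (\<Sum>x\<in>X - R. p x * f x) + (\<Sum>x\<in>R. p x * f x)"
    using assms(1,2) by (simp add: sum.subset_diff)
  also have "(\<Sum>x\<in>X - R. p x * f x) \<le> (\<Sum>x\<in>X - R. p x * 1)"
    using assms by (intro sum_mono mult_left_mono) (auto simp: mixed_def)
  also have "(\<Sum>x\<in>R. p x * f x) \<le> (\<Sum>x\<in>R. reassign_outside X R d p x * f x)"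
    using assms by (intro sum_mono mult_right_mono)
      (auto simp: reassign_outside_def mixed_def intro!: sum_nonneg)
  finally show ?thesis by simp
qed

lemma game_value_restrict_ge:
  assumes "finite X" "finite Y" "Y \<noteq> {}" "R \<subseteq> X" "d \<in> R"
    and bounded: "\<forall>a\<in>X. \<forall>b\<in>Y. 0 \<le> M 1 a b \<and> M 1 a b \<le> 1"
    and "p \<in> mixed X" and guarantee: "\<forall>b\<in>Y. L \<le> (\<Sum>a\<in>X. p a * M 1 a b)"
  shows "L - sum p (X - R) \<le> game_value M 1 R Y"
proof (rule game_value_ge)
  show "finite R" using assms(1,4) by (rule finite_subset[rotated])
  show "reassign_outside X R d p \<in> mixed R" using assms(1,4,5,7) by (rule reassign_outside_mixed)
  show "\<forall>q\<in>mixed Y. L - sum p (X - R) \<le> exp_payoff M 1 R Y (reassign_outside X R d p) q"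
  proof
    fix q assume q: "q \<in> mixed Y"
    define f where "f a = (\<Sum>b\<in>Y. q b * M 1 a b)" for a
    have "L \<le> (\<Sum>b\<in>Y. q b * (\<Sum>a\<in>X. p a * M 1 a b))"
      using assms(2) q guarantee by (rule mixed_expectation_ge)
    also have "\<dots> = (\<Sum>a\<in>X. p a * f a)"
      unfolding f_def using exp_payoff_rows exp_payoff_cols by metis
    finally have "L - sum p (X - R) \<le> (\<Sum>a\<in>X. p a * f a) - sum p (X - R)" by simp
    also have "\<dots> \<le> (\<Sum>a\<in>R. reassign_outside X R d p a * f a)"
      using assms(1,4,5,7) bounded assms(2) q unfolding f_def
      by (intro reassign_outside_expectation) (auto intro!: mixed_expectation_ge mixed_expectation_le)
    finally show "L - sum p (X - R) \<le> exp_payoff M 1 R Y (reassign_outside X R d p) q"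
      by (simp add: exp_payoff_rows f_def)
  qed
qed (use assms(2,3,4) bounded in auto)

section \<open>Debates in which the winning side may use every action\<close>

lemma ext_actions_finite: "finite C \<Longrightarrow> finite (ext_actions C)"
  by (simp add: ext_actions_def)

lemma None_in_ext_actions: "None \<in> ext_actions C"
  by (simp add: ext_actions_def)

lemma ext_actions_mono: "C \<subseteq> D \<Longrightarrow> ext_actions C \<subseteq> ext_actions D"
  unfolding ext_actions_def by blast

lemma is_policyD:
  assumes "is_policy A M" "a \<in> ext_actions A" "b \<in> ext_actions A"
  shows "0 \<le> M 1 a b" "M 1 a b \<le> 1" "M 2 a b = 1 - M 1 a b"
  using assms unfolding is_policy_def by (simp_all add: eq_diff_eq add.commute)

lemma restricted_game_values_sum_ge:
  assumes "finite A" "is_policy A M" "C \<subseteq> A"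
    and pq: "p \<in> mixed (ext_actions A)" "q \<in> mixed (ext_actions A)"
    and p_guarantee: "\<forall>b\<in>ext_actions A. c - \<epsilon> \<le> (\<Sum>a\<in>ext_actions A. p a * M 1 a b)"
    and q_guarantee: "\<forall>a\<in>ext_actions A. (\<Sum>b\<in>ext_actions A. q b * M 1 a b) \<le> c + \<epsilon>"
  shows "1 - 2 * \<epsilon> - sum p (ext_actions A - ext_actions C) - sum q (ext_actions A - ext_actions C)
         \<le> game_value M 1 (ext_actions C) (ext_actions A) + game_value M 2 (ext_actions A) (ext_actions C)"
proof -
  define X where "X = ext_actions A"
  have X: "finite X" "X \<noteq> {}" "ext_actions C \<subseteq> X" "None \<in> ext_actions C"
    unfolding X_def using assms(1) ext_actions_mono[OF assms(3)] None_in_ext_actions[of A]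
    by (auto intro: ext_actions_finite None_in_ext_actions)
  note policy = is_policyD[OF assms(2), folded X_def]
  have M1: "\<forall>a\<in>X. \<forall>b\<in>X. 0 \<le> M 1 a b \<and> M 1 a b \<le> 1"
    and M2: "\<forall>a\<in>X. \<forall>b\<in>X. 0 \<le> swap_roles M 1 a b \<and> swap_roles M 1 a b \<le> 1"
    using policy by (simp_all add: swap_roles_def)
  have q_guarantee2: "\<forall>a\<in>X. 1 - c - \<epsilon> \<le> (\<Sum>b\<in>X. q b * swap_roles M 1 b a)"
  proof
    fix a assume "a \<in> X"
    have "(\<Sum>b\<in>X. q b * swap_roles M 1 b a) = (\<Sum>b\<in>X. q b - q b * M 1 a b)"
      using policy \<open>a \<in> X\<close> by (intro sum.cong) (simp_all add: swap_roles_def right_diff_distrib)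
    also have "\<dots> = 1 - (\<Sum>b\<in>X. q b * M 1 a b)"
      using pq(2) by (simp add: X_def sum_subtractf mixed_def)
    finally show "1 - c - \<epsilon> \<le> (\<Sum>b\<in>X. q b * swap_roles M 1 b a)"
      using q_guarantee \<open>a \<in> X\<close> unfolding X_def by fastforce
  qed
  have "c - \<epsilon> - sum p (X - ext_actions C) \<le> game_value M 1 (ext_actions C) X"
    using X(1,1,2,3,4) M1 pq(1) p_guarantee unfolding X_def by (rule game_value_restrict_ge)
  moreover have "1 - c - \<epsilon> - sum q (X - ext_actions C) \<le> game_value (swap_roles M) 1 (ext_actions C) X"
    using X(1,1,2,3,4) M2 pq(2) q_guarantee2 unfolding X_def by (rule game_value_restrict_ge)
  ultimately show ?thesis by (simp add: X_def game_value_swap_roles)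
qed

lemma ckddg_error_ge_lost_mass:
  assumes "is_ckddg A S P (\<lambda>_. A) Cl" "is_policy A M" "0 < \<epsilon>"
  obtains p q where "p \<in> mixed (ext_actions A)" "q \<in> mixed (ext_actions A)"
    "1 / 2 - \<epsilon> - (\<Sum>s\<in>S. P s * (sum p (ext_actions A - ext_actions (Cl s))
                                 + sum q (ext_actions A - ext_actions (Cl s)))) / 2
       \<le> ckddg_error S P (\<lambda>_. A) Cl M"
proof -
  define X where "X = ext_actions A"
  define lost where "lost p s = sum p (X - ext_actions (Cl s))" for p :: "'a option \<Rightarrow> real" and s
  have A: "finite A" "\<forall>s\<in>S. Cl s \<subseteq> A" "\<forall>s\<in>S. 0 \<le> P s" "sum P S = 1"
    using assms(1) by (simp_all add: is_ckddg_def)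
  have X: "finite X" "X \<noteq> {}"
    unfolding X_def using A(1) None_in_ext_actions[of A] by (auto intro: ext_actions_finite)
  obtain c p q where pq: "p \<in> mixed X" "q \<in> mixed X"
    "\<forall>b\<in>X. c - \<epsilon> \<le> (\<Sum>a\<in>X. p a * M 1 a b)" "\<forall>a\<in>X. (\<Sum>b\<in>X. q b * M 1 a b) \<le> c + \<epsilon>"
    by (rule minimax_approx[OF X(1,1,2,2) assms(3), where a = "M 1"])
  have "(\<Sum>s\<in>S. P s * ((1 - 2 * \<epsilon> - lost p s - lost q s) / 2)) \<le> ckddg_error S P (\<lambda>_. A) Cl M"
    unfolding ckddg_error_def wval_def lost_def X_def
    using restricted_game_values_sum_ge[OF A(1) assms(2) _ pq[unfolded X_def]] A(2,3)
    by (intro sum_mono mult_left_mono divide_right_mono) auto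
  moreover have "(\<Sum>s\<in>S. P s * ((1 - 2 * \<epsilon> - lost p s - lost q s) / 2))
      = (\<Sum>s\<in>S. P s * (1 / 2 - \<epsilon>) - P s * (lost p s + lost q s) / 2)"
    by (rule sum.cong) (simp_all add: field_simps)
  also have "\<dots> = 1 / 2 - \<epsilon> - (\<Sum>s\<in>S. P s * (lost p s + lost q s)) / 2"
    using A(4) by (simp add: sum_subtractf sum_divide_distrib[symmetric] sum_distrib_right[symmetric])
  ultimately show ?thesis using that pq unfolding lost_def X_def by auto
qed

lemma sum_lost_mass:
  fixes p :: "'a option \<Rightarrow> real"
  assumes "finite A" "finite S"
  shows "(\<Sum>s\<in>S. sum p (ext_actions A - ext_actions (C s)))
         = (\<Sum>a\<in>A. p (Some a) * real (card {s\<in>S. a \<notin> C s}))"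
proof -
  have "sum p (ext_actions A - ext_actions (C s)) = (\<Sum>a\<in>A. if a \<notin> C s then p (Some a) else 0)" for s
  proof -
    have "ext_actions A - ext_actions (C s) = Some ` {a\<in>A. a \<notin> C s}"
      unfolding ext_actions_def by auto
    then show ?thesis using assms(1) by (simp add: sum.reindex sum.inter_filter)
  qed
  then have "(\<Sum>s\<in>S. sum p (ext_actions A - ext_actions (C s)))
      = (\<Sum>a\<in>A. \<Sum>s\<in>S. if a \<notin> C s then p (Some a) else 0)"
    by (simp add: sum.swap[of _ S])
  also have "\<dots> = (\<Sum>a\<in>A. p (Some a) * real (card {s\<in>S. a \<notin> C s}))"
    using assms(2) by (simp add: sum.inter_filter[symmetric] mult.commute)
  finally show ?thesis .
qed

section \<open>Cyclic windows of actions\<close>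

definition cyclic_window :: "nat \<Rightarrow> nat \<Rightarrow> nat \<Rightarrow> nat set" where
  "cyclic_window m n s = {a\<in>{..<m}. (a + s) mod m < n}"

lemma card_shifted_residues_below:
  fixes m n x :: nat
  assumes "n \<le> m"
  shows "card {y\<in>{..<m}. (x + y) mod m < n} = n"
proof -
  define g where "g y = (x + y) mod m" for y
  have "inj_on g {..<m}"
  proof (rule inj_onI)
    fix y y' assume "y \<in> {..<m}" "y' \<in> {..<m}" "g y = g y'"
    moreover from \<open>g y = g y'\<close> have "y mod m = y' mod m" by (simp add: g_def nat_mod_eq_iff)
    ultimately show "y = y'" by simp
  qed
  moreover have "g ` {..<m} \<subseteq> {..<m}" using assms by (auto simp: g_def)
  ultimately have "g ` {..<m} = {..<m}" by (intro endo_inj_surj) auto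
  have "g ` {y\<in>{..<m}. g y < n} = {t \<in> g ` {..<m}. t < n}" by auto
  also have "\<dots> = {..<n}" using \<open>g ` {..<m} = {..<m}\<close> assms by auto
  finally have "g ` {y\<in>{..<m}. g y < n} = {..<n}" .
  moreover have "card (g ` {y\<in>{..<m}. g y < n}) = card {y\<in>{..<m}. g y < n}"
    by (rule card_image, rule inj_on_subset[OF \<open>inj_on g {..<m}\<close>]) auto
  ultimately show ?thesis by (simp add: g_def)
qed

lemma card_cyclic_window: "n \<le> m \<Longrightarrow> card (cyclic_window m n s) = n"
  unfolding cyclic_window_def using card_shifted_residues_below[of n m s] by (simp add: add.commute)

lemma card_outside_cyclic_window:
  assumes "n \<le> m" "a < m"
  shows "card {s\<in>{..<m}. a \<notin> cyclic_window m n s} = m - n"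
proof -
  have "{s\<in>{..<m}. a \<notin> cyclic_window m n s} = {..<m} - {s\<in>{..<m}. (a + s) mod m < n}"
    using assms(2) by (auto simp: cyclic_window_def)
  moreover have "card ({..<m} - {s\<in>{..<m}. (a + s) mod m < n}) = m - n"
    using card_shifted_residues_below[OF assms(1), of a] by (subst card_Diff_subset) auto
  ultimately show ?thesis by simp
qed

lemma lost_mass_cyclic_windows:
  assumes "n \<le> m" "p \<in> mixed (ext_actions {..<m})"
  shows "(\<Sum>s<m. sum p (ext_actions {..<m} - ext_actions (cyclic_window m n s))) \<le> real (m - n)"
proof -
  have "(\<Sum>s<m. sum p (ext_actions {..<m} - ext_actions (cyclic_window m n s)))
      = (\<Sum>a<m. p (Some a) * real (card {s\<in>{..<m}. a \<notin> cyclic_window m n s}))"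
    by (rule sum_lost_mass) auto
  also have "\<dots> = (\<Sum>a<m. p (Some a) * real (m - n))"
    using card_outside_cyclic_window[OF assms(1)] by (intro sum.cong) auto
  also have "\<dots> = (\<Sum>a<m. p (Some a)) * real (m - n)"
    by (simp add: sum_distrib_right)
  also have "\<dots> \<le> 1 * real (m - n)"
  proof (rule mult_right_mono)
    have "(\<Sum>a<m. p (Some a)) = sum p (Some ` {..<m})" by (simp add: sum.reindex)
    also have "\<dots> \<le> sum p (ext_actions {..<m})"
      using assms(2) by (intro sum_mono2) (auto simp: ext_actions_def mixed_def)
    also have "\<dots> = 1" using assms(2) by (simp add: mixed_def)
    finally show "(\<Sum>a<m. p (Some a)) \<le> 1" .
  qed simp
  finally show ?thesis by simp
qed

lemma is_ckddg_cyclic: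
  "0 < m \<Longrightarrow> is_ckddg {..<m} {..<m} (\<lambda>_. 1 / real m) (\<lambda>_. {..<m}) (cyclic_window m n)"
  unfolding is_ckddg_def cyclic_window_def by auto

lemma ckddg_error_cyclic_ge:
  assumes "n \<le> m" "0 < m" "is_policy {..<m} M"
  shows "(2 * real n - real m) / (2 * real m)
         \<le> ckddg_error {..<m} (\<lambda>_. 1 / real m) (\<lambda>_. {..<m}) (cyclic_window m n) M"
proof (rule field_le_epsilon)
  fix \<epsilon> :: real assume "0 < \<epsilon>"
  define lost where "lost p s = sum p (ext_actions {..<m} - ext_actions (cyclic_window m n s))"
    for p :: "nat option \<Rightarrow> real" and s
  obtain p q where pq: "p \<in> mixed (ext_actions {..<m})" "q \<in> mixed (ext_actions {..<m})"
    and err: "1 / 2 - \<epsilon> - (\<Sum>s<m. 1 / real m * (lost p s + lost q s)) / 2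
              \<le> ckddg_error {..<m} (\<lambda>_. 1 / real m) (\<lambda>_. {..<m}) (cyclic_window m n) M"
    using ckddg_error_ge_lost_mass[OF is_ckddg_cyclic[OF assms(2)] assms(3) \<open>0 < \<epsilon>\<close>]
    unfolding lost_def by blast
  have "(\<Sum>s<m. 1 / real m * (lost p s + lost q s)) = ((\<Sum>s<m. lost p s) + (\<Sum>s<m. lost q s)) / real m"
    by (simp add: sum.distrib sum_divide_distrib[symmetric])
  also have "\<dots> \<le> 2 * real (m - n) / real m"
    using lost_mass_cyclic_windows[OF assms(1) pq(1)] lost_mass_cyclic_windows[OF assms(1) pq(2)]
      assms(2) unfolding lost_def by (intro divide_right_mono) auto
  finally have "1 / 2 - \<epsilon> - real (m - n) / real m
      \<le> ckddg_error {..<m} (\<lambda>_. 1 / real m) (\<lambda>_. {..<m}) (cyclic_window m n) M"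
    using err by simp
  moreover have "(2 * real n - real m) / (2 * real m) = 1 / 2 - real (m - n) / real m"
    using assms(1,2) by (simp add: of_nat_diff field_simps)
  ultimately show "(2 * real n - real m) / (2 * real m)
      \<le> ckddg_error {..<m} (\<lambda>_. 1 / real m) (\<lambda>_. {..<m}) (cyclic_window m n) M + \<epsilon>"
    by simp
qed

theorem theoremE1:
  fixes m n :: nat
  assumes "0 < n" and "n \<le> m"
  shows "\<exists>(A::nat set) (S::nat set) (P::nat \<Rightarrow> real) Cw Cl.
           is_ckddg A S P Cw Cl \<and>
           (\<forall>s\<in>S. card (Cw s) \<ge> m \<and> card (Cl s) \<le> n) \<and>
           (\<forall>M. is_policy A M \<longrightarrow>
                ckddg_error S P Cw Cl M \<ge> (2 * real n - real m) / (2 * real m))"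
proof (intro exI conjI)
  have "0 < m" using assms by simp
  then show "is_ckddg {..<m} {..<m} (\<lambda>_. 1 / real m) (\<lambda>_. {..<m}) (cyclic_window m n)"
    by (rule is_ckddg_cyclic)
  show "\<forall>s\<in>{..<m}. card {..<m} \<ge> m \<and> card (cyclic_window m n s) \<le> n"
    using card_cyclic_window[OF assms(2)] by simp
  show "\<forall>M. is_policy {..<m} M \<longrightarrow> (2 * real n - real m) / (2 * real m)
          \<le> ckddg_error {..<m} (\<lambda>_. 1 / real m) (\<lambda>_. {..<m}) (cyclic_window m n) M"
    using ckddg_error_cyclic_ge[OF assms(2) \<open>0 < m\<close>] by blast
qed

end
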